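(* Let $N=2J$ with $J\ge 1$ an integer. For real numbers $\gamma_1,\dots,\gamma_{N-2}$ satisfying $\gamma_n=\gamma_{N-1-n}$ for all $n$, let $H=H(\gamma)$ be the real $N\times N$ matrix with entries $$H_{n,n}=2n-1-N\ (1\le n\le N),\qquad H_{n,n+2}=\gamma_n,\quad H_{n+2,n}=-\gamma_n\ (1\le n\le N-2),$$ and all other entries zero. Then: (a) The span of the odd-indexed standard basis vectors $e_1,e_3,\dots,e_{2J-1}$ and the span of the even-indexed ones $e_2,e_4,\dots,e_{2J}$ are both invariant under $H$, so $H$ is permutation-similar to $A\oplus B$, where $A$ is the $J\times J$ tridiagonal matrix with diagonal $(1-2J,5-2J,\dots,2J-3)$, superdiagonal $(\gamma_1,\gamma_3,\dots,\gamma_{2J-3})$ and subdiagonal $(-\gamma_1,-\gamma_3,\dots,-\gamma_{2J-3})$, and $B$ is the $J\times J$ tridiagonal matrix with diagonal $(3-2J,7-2J,\dots,2J-1)$, superdiagonal $(\gamma_2,\gamma_4,\dots,\gamma_{2J-2})$ and subdiagonal the negatives of these. (b) If all eigenvalues of $A$ coincide, their common value is $\eta=-1$; if all eigenvalues of $B$ coincide, their common value is $\eta=+1$. Consequently, for no real choice of the $\gamma_n$ does $H$ have a single eigenvalue of algebraic multiplicity $N$. (c) For the choice $\gamma_{2k-1}=\gamma_{2k}=2\sqrt{k(J-k)}$, $k=1,\dots,J-1$ (which satisfies $\gamma_n=\gamma_{N-1-n}$), one has $A=-I_J+2T_J$ and $B=I_J+2T_J$; thus $A$ has the single eigenvalue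 $-1$ and $B$ the single eigenvalue $+1$, each with a single Jordan block of size $J$ (geometric multiplicity one).
   Context: For an integer $M\ge1$, $T_M$ denotes the real $M\times M$ tridiagonal matrix with $(T_M)_{k,k}=2k-1-M$ for $1\le k\le M$, $(T_M)_{k,k+1}=\sqrt{k(M-k)}$ and $(T_M)_{k+1,k}=-\sqrt{k(M-k)}$ for $1\le k\le M-1$, all other entries zero (so $T_1=[0]$, $T_2=\begin{pmatrix}-1&1\\-1&1\end{pmatrix}$, $T_3=\begin{pmatrix}-2&\sqrt2&0\\-\sqrt2&0&\sqrt2\\0&-\sqrt2&2\end{pmatrix}$). It is used that $T_M$ is nilpotent with a single Jordan block of size $M$ (the exceptional-point limit of the tridiagonal toy Hamiltonian of dimension $M$). *)

theory Defs
  imports "Jordan_Normal_Form.Jordan_Normal_Form" "HOL-Combinatorics.Permutations"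
begin

text \<open>All matrices are Jordan_Normal_Form matrices, indexed from 0.
  Paper index n (1-based) corresponds to matrix index n-1.
  The parameters gamma_1, ..., gamma_(N-2) are a function nat to real, used at 1..N-2.\<close>

definition T_mat :: "nat \<Rightarrow> real mat" where
  "T_mat M = mat M M (\<lambda>(i,j).
      if i = j then 2 * real (i+1) - 1 - real M
      else if j = i + 1 then sqrt (real (i+1) * (real M - real (i+1)))
      else if i = j + 1 then - sqrt (real (j+1) * (real M - real (j+1)))
      else 0)"

definition H_mat :: "nat \<Rightarrow> (nat \<Rightarrow> real) \<Rightarrow> real mat" where
  "H_mat N \<gamma> = mat N N (\<lambda>(i,j).
      if i = j then 2 * real (i+1) - 1 - real N
      else if j = i + 2 then \<gamma> (i+1)
      else if i = j + 2 then - \<gamma> (j+1)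
      else 0)"

definition A_mat :: "nat \<Rightarrow> (nat \<Rightarrow> real) \<Rightarrow> real mat" where
  "A_mat J \<gamma> = mat J J (\<lambda>(i,j).
      if i = j then 1 - 2 * real J + 4 * real i
      else if j = i + 1 then \<gamma> (2*i+1)
      else if i = j + 1 then - \<gamma> (2*j+1)
      else 0)"

definition B_mat :: "nat \<Rightarrow> (nat \<Rightarrow> real) \<Rightarrow> real mat" where
  "B_mat J \<gamma> = mat J J (\<lambda>(i,j).
      if i = j then 3 - 2 * real J + 4 * real i
      else if j = i + 1 then \<gamma> (2*i+2)
      else if i = j + 1 then - \<gamma> (2*j+2)
      else 0)"

definition perm_matrix :: "nat \<Rightarrow> (nat \<Rightarrow> nat) \<Rightarrow> real mat" where
  "perm_matrix n \<sigma> = mat n n (\<lambda>(i,j). if j = \<sigma> i then 1 else 0)"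

text \<open>Span of the odd-indexed (1-based) standard basis vectors e_1, e_3, ...:
  vectors vanishing at all 1-based even positions (0-based odd indices); similarly even.\<close>
definition odd_span :: "nat \<Rightarrow> real vec set" where
  "odd_span N = {v \<in> carrier_vec N. \<forall>i<N. odd i \<longrightarrow> v $ i = 0}"

definition even_span :: "nat \<Rightarrow> real vec set" where
  "even_span N = {v \<in> carrier_vec N. \<forall>i<N. even i \<longrightarrow> v $ i = 0}"

abbreviation cmat :: "real mat \<Rightarrow> complex mat" where
  "cmat M \<equiv> map_mat complex_of_real M"

end

theory Submission
  imports Defs "Jordan_Normal_Form.Schur_Decomposition"
begin

(* Part (a): H only couples indices of equal parity, so listing the odd-indexed basis vectors
   first turns H into the block diagonal matrix diag(A, B).
   Part (b): tr A = -J and tr B = J, so if A (resp. B) has a single eigenvalue it is -1 (resp. 1);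
   since char H = char A * char B, an eigenvalue of H of multiplicity N would be the single
   eigenvalue of both A and B. Conjugating 2T_M by
   diag(sqrt(binomial(M-1, i))) gives an integer tridiagonal matrix K with
   K (binomial(j, i))_i = 2 (j - M + 1) (binomial(j+1, i))_i, so K is similar to the
   nilpotent shift and hence to a single Jordan block. *)

(* HOL-Algebra, imported through Jordan_Normal_Form, would otherwise make order denote the
   order of a group rather than the multiplicity of a polynomial root. *)
hide_const (open) Coset.order

lemma perm_matrix_carrier[simp]: "perm_matrix n \<sigma> \<in> carrier_mat n n"
  by (simp add: perm_matrix_def)

lemma perm_matrix_mult:
  assumes X: "X \<in> carrier_mat n m" and \<sigma>: "\<And>i. i < n \<Longrightarrow> \<sigma> i < n"
  shows "perm_matrix n \<sigma> * X = mat n m (\<lambda>(i,j). X $$ (\<sigma> i, j))"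
proof (rule eq_matI)
  fix i j assume "i < dim_row (mat n m (\<lambda>(i,j). X $$ (\<sigma> i, j)))"
    and "j < dim_col (mat n m (\<lambda>(i,j). X $$ (\<sigma> i, j)))"
  then have i: "i < n" and j: "j < m" by auto
  have "(perm_matrix n \<sigma> * X) $$ (i,j) = (\<Sum>k\<in>{0..<n}. (if k = \<sigma> i then 1 else 0) * X $$ (k,j))"
    using X i j by (simp add: perm_matrix_def scalar_prod_def)
  also have "\<dots> = (\<Sum>k\<in>{0..<n}. if k = \<sigma> i then X $$ (k,j) else 0)"
    by (rule sum.cong) auto
  finally show "(perm_matrix n \<sigma> * X) $$ (i,j) = mat n m (\<lambda>(i,j). X $$ (\<sigma> i, j)) $$ (i,j)"
    using \<sigma>[OF i] i j by simp
qed (use X in \<open>auto simp: perm_matrix_def\<close>)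

lemma mult_transpose_perm_matrix:
  assumes X: "X \<in> carrier_mat m n" and \<sigma>: "\<And>i. i < n \<Longrightarrow> \<sigma> i < n"
  shows "X * transpose_mat (perm_matrix n \<sigma>) = mat m n (\<lambda>(i,j). X $$ (i, \<sigma> j))"
proof (rule eq_matI)
  fix i j assume "i < dim_row (mat m n (\<lambda>(i,j). X $$ (i, \<sigma> j)))"
    and "j < dim_col (mat m n (\<lambda>(i,j). X $$ (i, \<sigma> j)))"
  then have i: "i < m" and j: "j < n" by auto
  have "(X * transpose_mat (perm_matrix n \<sigma>)) $$ (i,j)
      = (\<Sum>k\<in>{0..<n}. X $$ (i,k) * (if k = \<sigma> j then 1 else 0))"
    using X i j by (simp add: perm_matrix_def scalar_prod_def)
  also have "\<dots> = (\<Sum>k\<in>{0..<n}. if k = \<sigma> j then X $$ (i,k) else 0)"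
    by (rule sum.cong) auto
  finally show "(X * transpose_mat (perm_matrix n \<sigma>)) $$ (i,j) = mat m n (\<lambda>(i,j). X $$ (i, \<sigma> j)) $$ (i,j)"
    using \<sigma>[OF j] i j by simp
qed (use X in \<open>auto simp: perm_matrix_def\<close>)

lemma perm_matrix_conjugate:
  assumes X: "X \<in> carrier_mat n n" and \<sigma>: "\<And>i. i < n \<Longrightarrow> \<sigma> i < n"
  shows "perm_matrix n \<sigma> * X * transpose_mat (perm_matrix n \<sigma>)
    = mat n n (\<lambda>(i,j). X $$ (\<sigma> i, \<sigma> j))"
  by (subst perm_matrix_mult[OF X \<sigma>], simp,
      subst mult_transpose_perm_matrix[where m = n], auto simp: \<sigma>)

lemma perm_matrix_mult_transpose:
  assumes \<sigma>: "\<And>i. i < n \<Longrightarrow> \<sigma> i < n" and inj: "inj_on \<sigma> {..<n}"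
  shows "perm_matrix n \<sigma> * transpose_mat (perm_matrix n \<sigma>) = 1\<^sub>m n"
proof -
  have "perm_matrix n \<sigma> * transpose_mat (perm_matrix n \<sigma>)
      = mat n n (\<lambda>(i,j). transpose_mat (perm_matrix n \<sigma>) $$ (\<sigma> i, j))"
    by (rule perm_matrix_mult[OF _ \<sigma>]) simp
  also have "\<dots> = 1\<^sub>m n"
    using \<sigma> inj by (intro eq_matI) (auto simp: perm_matrix_def dest: inj_onD)
  finally show ?thesis .
qed

lemma similar_mat_wit_perm_matrix:
  assumes X: "X \<in> carrier_mat n n" and \<sigma>: "bij_betw \<sigma> {..<n} {..<n}"
  shows "similar_mat_wit (mat n n (\<lambda>(i,j). X $$ (\<sigma> i, \<sigma> j))) X
    (perm_matrix n \<sigma>) (transpose_mat (perm_matrix n \<sigma>))"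
proof -
  have maps: "\<And>i. i < n \<Longrightarrow> \<sigma> i < n" and inj: "inj_on \<sigma> {..<n}"
    using \<sigma> by (auto simp: bij_betw_def)
  have PQ: "perm_matrix n \<sigma> * transpose_mat (perm_matrix n \<sigma>) = 1\<^sub>m n"
    by (rule perm_matrix_mult_transpose[OF maps inj])
  have QP: "transpose_mat (perm_matrix n \<sigma>) * perm_matrix n \<sigma> = 1\<^sub>m n"
    by (rule mat_mult_left_right_inverse[OF _ _ PQ]) simp_all
  show ?thesis
    by (rule similar_mat_witI[OF PQ QP perm_matrix_conjugate[OF X maps, symmetric]])
      (use X in auto)
qed

lemma similar_mat_wit_add_scalar:
  fixes X Y P Q :: "'a::comm_ring_1 mat"
  assumes X: "X \<in> carrier_mat n n" and w: "similar_mat_wit X Y P Q"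
  shows "similar_mat_wit (a \<cdot>\<^sub>m 1\<^sub>m n + X) (a \<cdot>\<^sub>m 1\<^sub>m n + Y) P Q"
proof -
  note d = similar_mat_witD2[OF X w]
  have P: "P \<in> carrier_mat n n" and Q: "Q \<in> carrier_mat n n" and Y: "Y \<in> carrier_mat n n"
    using d by auto
  have "P * (a \<cdot>\<^sub>m 1\<^sub>m n + Y) * Q = (a \<cdot>\<^sub>m P + P * Y) * Q"
    using P Y by (simp add: mult_add_distrib_mat[OF P _ Y] mult_smult_distrib[of _ n n _ n])
  also have "\<dots> = a \<cdot>\<^sub>m (P * Q) + P * Y * Q"
    using P Y Q by (simp add: add_mult_distrib_mat[of _ n n] mult_smult_assoc_mat[of _ n n _ n])
  also have "\<dots> = a \<cdot>\<^sub>m 1\<^sub>m n + X" using d by simp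
  finally show ?thesis
    by (intro similar_mat_witI[of _ _ n]) (use d X Y in auto)
qed

lemma similar_mat_wit_of_real:
  assumes X: "X \<in> carrier_mat n n" and w: "similar_mat_wit X Y P Q"
  shows "similar_mat_wit (cmat X) (cmat Y) (cmat P) (cmat Q)"
proof -
  note d = similar_mat_witD2[OF X w]
  have P: "P \<in> carrier_mat n n" and Q: "Q \<in> carrier_mat n n" and Y: "Y \<in> carrier_mat n n"
    using d by auto
  have "cmat P * cmat Q = 1\<^sub>m n"
    using of_real_hom.mat_hom_mult[OF P Q] d of_real_hom.mat_hom_one by metis
  moreover have "cmat Q * cmat P = 1\<^sub>m n"
    using of_real_hom.mat_hom_mult[OF Q P] d of_real_hom.mat_hom_one by metis
  moreover have "cmat X = cmat P * cmat Y * cmat Q"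
    using of_real_hom.mat_hom_mult[OF mult_carrier_mat[OF P Y] Q] of_real_hom.mat_hom_mult[OF P Y] d
    by metis
  ultimately show ?thesis by (intro similar_mat_witI[of _ _ n]) (use X Y P Q in auto)
qed

definition mat_trace :: "'a::comm_ring_1 mat \<Rightarrow> 'a" where
  "mat_trace A = (\<Sum>i\<in>{0..<dim_row A}. A $$ (i,i))"

lemma mat_trace_mult_comm:
  assumes A: "A \<in> carrier_mat n m" and B: "B \<in> carrier_mat m n"
  shows "mat_trace (A * B) = mat_trace (B * A)"
proof -
  have "mat_trace (A * B) = (\<Sum>i\<in>{0..<n}. \<Sum>k\<in>{0..<m}. A $$ (i,k) * B $$ (k,i))"
    unfolding mat_trace_def using A B by (simp add: scalar_prod_def)
  also have "\<dots> = (\<Sum>k\<in>{0..<m}. \<Sum>i\<in>{0..<n}. B $$ (k,i) * A $$ (i,k))"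
    by (subst sum.swap) (simp add: mult.commute)
  also have "\<dots> = mat_trace (B * A)"
    unfolding mat_trace_def using A B by (simp add: scalar_prod_def)
  finally show ?thesis .
qed

lemma mat_trace_similar:
  assumes A: "A \<in> carrier_mat n n" and w: "similar_mat_wit A B P Q"
  shows "mat_trace A = mat_trace B"
proof -
  note d = similar_mat_witD2[OF A w]
  have P: "P \<in> carrier_mat n n" and Q: "Q \<in> carrier_mat n n" and B: "B \<in> carrier_mat n n"
    using d by auto
  have "mat_trace A = mat_trace (P * (B * Q))" using d P B Q by simp
  also have "\<dots> = mat_trace (B * Q * P)" by (rule mat_trace_mult_comm[OF P]) (use B Q in auto)
  also have "\<dots> = mat_trace B" using d B Q P by simp
  finally show ?thesis .
qed

text \<open>Via a Schur decomposition: the diagonal of the triangular form lists the roots.\<close>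
lemma mat_trace_eq_sum_roots:
  fixes A :: "complex mat"
  assumes A: "A \<in> carrier_mat n n" and cp: "char_poly A = (\<Prod>a\<leftarrow>es. [:- a, 1:])"
  shows "mat_trace A = sum_list es"
proof -
  obtain B P Q where "schur_decomposition A es = (B,P,Q)" by (metis prod_cases3)
  from schur_decomposition[OF A cp this]
  have w: "similar_mat_wit A B P Q" and dB: "diag_mat B = es" by simp_all
  have "dim_row B = n" using similar_mat_witD2(5)[OF A w] by simp
  then have "mat_trace B = sum_list (diag_mat B)"
    unfolding mat_trace_def diag_mat_def by (simp flip: sum_set_upt_conv_sum_list_nat)
  with mat_trace_similar[OF A w] dB show ?thesis by simp
qed

lemma mat_trace_unique_eigenvalue:
  fixes A :: "complex mat"
  assumes A: "A \<in> carrier_mat n n" and unique: "\<And>e. eigenvalue A e \<Longrightarrow> e = c"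
  shows "mat_trace A = of_nat n * c"
proof -
  obtain es where cp: "char_poly A = (\<Prod>a\<leftarrow>es. [:- a, 1:])" and len: "length es = n"
    using char_poly_factorized[OF A] by blast
  have "e = c" if "e \<in> set es" for e
  proof (rule unique)
    have "poly (char_poly A) e = 0"
      unfolding cp using that by (induction es) auto
    then show "eigenvalue A e" using eigenvalue_root_char_poly[OF A] by simp
  qed
  then have "es = replicate n c" using len replicate_length_same by metis
  then show ?thesis using mat_trace_eq_sum_roots[OF A cp] by (simp add: sum_list_replicate)
qed

section \<open>The matrix T_M is similar to a nilpotent Jordan block\<close>

definition binom_sqrt :: "nat \<Rightarrow> nat \<Rightarrow> real" where
  "binom_sqrt M i = sqrt (real ((M - 1) choose i))"

definition T_rescaled :: "nat \<Rightarrow> real mat" where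
  "T_rescaled M = mat M M (\<lambda>(i,j).
     if i = j then 2 * (2 * real i - (real M - 1))
     else if j = i + 1 then 2 * real (i+1)
     else if i = j + 1 then - 2 * (real M - 1 - real j)
     else 0)"

lemma binomial_absorption_real:
  "real (Suc k) * real (j choose Suc k) = (real j - real k) * real (j choose k)"
proof (cases "k \<le> j")
  case True
  have "Suc k * (j choose Suc k) = (j - k) * (j choose k)"
    using binomial_absorb_comp[of j k] binomial_absorption[of k j] by simp
  then have "real (Suc k * (j choose Suc k)) = real ((j - k) * (j choose k))" by simp
  then show ?thesis using True by (simp add: of_nat_diff algebra_simps)
qed (auto simp: binomial_eq_0)

lemma binom_sqrt_pos: "i < M \<Longrightarrow> binom_sqrt M i > 0"
  unfolding binom_sqrt_def by simp

lemma binomial_absorption_pred: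
  assumes "i + 1 < M"
  shows "real (i+1) * real ((M-1) choose (i+1)) = (real M - real (i+1)) * real ((M-1) choose i)"
  using binomial_absorption_real[of i "M - 1"] assms by (simp add: of_nat_diff)

lemma binom_sqrt_T_superdiag:
  assumes "i + 1 < M"
  shows "binom_sqrt M i * sqrt (real (i+1) * (real M - real (i+1))) = real (i+1) * binom_sqrt M (i+1)"
proof -
  let ?x = "real ((M-1) choose i)" and ?y = "real ((M-1) choose (i+1))"
  have "?x * (real (i+1) * (real M - real (i+1))) = real (i+1) * ((real M - real (i+1)) * ?x)"
    by (simp only: mult_ac)
  also have "\<dots> = (real (i+1))\<^sup>2 * ?y"
    unfolding binomial_absorption_pred[OF assms, symmetric] by (simp add: power2_eq_square)
  finally have "sqrt ?x * sqrt (real (i+1) * (real M - real (i+1))) = sqrt ((real (i+1))\<^sup>2) * sqrt ?y"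
    by (simp only: real_sqrt_mult[symmetric])
  then show ?thesis unfolding binom_sqrt_def by simp
qed

lemma binom_sqrt_T_subdiag:
  assumes "i + 1 < M"
  shows "binom_sqrt M (i+1) * sqrt (real (i+1) * (real M - real (i+1))) = (real M - 1 - real i) * binom_sqrt M i"
proof -
  let ?x = "real ((M-1) choose i)" and ?y = "real ((M-1) choose (i+1))"
  have "?y * (real (i+1) * (real M - real (i+1))) = (real M - real (i+1)) * (real (i+1) * ?y)"
    by (simp only: mult_ac)
  also have "\<dots> = (real M - 1 - real i)\<^sup>2 * ?x"
    unfolding binomial_absorption_pred[OF assms] by (simp add: power2_eq_square algebra_simps)
  finally have "sqrt ?y * sqrt (real (i+1) * (real M - real (i+1))) = sqrt ((real M - 1 - real i)\<^sup>2) * sqrt ?x"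
    by (simp only: real_sqrt_mult[symmetric])
  then show ?thesis using assms unfolding binom_sqrt_def by simp
qed

lemma T_similar_T_rescaled:
  "similar_mat_wit (2 \<cdot>\<^sub>m T_mat M) (T_rescaled M)
     (mat_diag M (\<lambda>i. 1 / binom_sqrt M i)) (mat_diag M (binom_sqrt M))"
proof -
  let ?D = "mat_diag M (binom_sqrt M)" and ?D' = "mat_diag M (\<lambda>i. 1 / binom_sqrt M i)"
  have T: "2 \<cdot>\<^sub>m T_mat M \<in> carrier_mat M M" and K: "T_rescaled M \<in> carrier_mat M M"
    by (simp_all add: T_mat_def T_rescaled_def)
  have "binom_sqrt M i \<noteq> 0" if "i < M" for i using binom_sqrt_pos[OF that] by simp
  then have DD': "?D * ?D' = 1\<^sub>m M" and D'D: "?D' * ?D = 1\<^sub>m M"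
    unfolding mat_diag_diag by (auto simp: mat_diag_def)
  have DT: "?D * (2 \<cdot>\<^sub>m T_mat M) = T_rescaled M * ?D"
  proof -
    have "binom_sqrt M i * (2 \<cdot>\<^sub>m T_mat M) $$ (i,j) = T_rescaled M $$ (i,j) * binom_sqrt M j"
      if ij: "i < M" "j < M" for i j
    proof -
      consider "j = i + 1" | "i = j + 1" | "j \<noteq> i + 1" "i \<noteq> j + 1" by blast
      then show ?thesis
      proof cases
        case 1
        then show ?thesis using binom_sqrt_T_superdiag[of i M] ij
          by (simp add: T_mat_def T_rescaled_def mult.commute mult.left_commute)
      next
        case 2
        then show ?thesis using binom_sqrt_T_subdiag[of j M] ij
          by (simp add: T_mat_def T_rescaled_def algebra_simps)
      qed (use ij in \<open>auto simp: T_mat_def T_rescaled_def\<close>)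
    qed
    then show ?thesis
      unfolding mat_diag_mult_left[OF T] mat_diag_mult_right[OF K] by (auto intro!: eq_matI)
  qed
  have "2 \<cdot>\<^sub>m T_mat M = (?D' * ?D) * (2 \<cdot>\<^sub>m T_mat M)"
    using T by (simp only: D'D left_mult_one_mat)
  also have "\<dots> = ?D' * (?D * (2 \<cdot>\<^sub>m T_mat M))"
    by (rule assoc_mult_mat[of _ M M _ M _ M]) (use T in auto)
  also have "\<dots> = ?D' * T_rescaled M * ?D"
    using K by (simp add: DT assoc_mult_mat[of ?D' M M _ M _ M])
  finally show ?thesis
    by (intro similar_mat_witI[OF D'D DD']) (use T K in auto)
qed

fun binom_col_scale :: "nat \<Rightarrow> nat \<Rightarrow> real" where
  "binom_col_scale M 0 = 1"
| "binom_col_scale M (Suc j) = 2 * (real j - (real M - 1)) * binom_col_scale M j"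

definition binom_col_mat :: "nat \<Rightarrow> real mat" where
  "binom_col_mat M = mat M M (\<lambda>(i,j). binom_col_scale M j * real (j choose i))"

definition subdiag_shift :: "nat \<Rightarrow> real mat" where
  "subdiag_shift M = mat M M (\<lambda>(i,j). if i = j + 1 then 1 else 0)"

lemma binomial_three_term:
  fixes n :: real
  shows "(if 0 < i then - (n - real i + 1) * real (j choose (i-1)) else 0)
        + (2 * real i - n) * real (j choose i) + real (i+1) * real (j choose (i+1))
       = (real j - n) * real (Suc j choose i)"
proof (cases i)
  case 0
  then show ?thesis using binomial_absorption_real[of 0 j] by simp
next
  case (Suc k)
  let ?a = "real (j choose k)" and ?b = "real (j choose i)"
  have R1: "real i * ?b = (real j - real k) * ?a" using binomial_absorption_real[of k j] Suc by simp
  have R2: "real (i+1) * real (j choose (i+1)) = (real j - real i) * ?b"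
    using binomial_absorption_real[of i j] by simp
  have "(if 0 < i then - (n - real i + 1) * real (j choose (i-1)) else 0)
        + (2 * real i - n) * ?b + real (i+1) * real (j choose (i+1))
      = (real j - n) * (?b + ?a) + (real i * ?b - (real j - real k) * ?a)"
    using Suc R2 by (simp add: algebra_simps)
  also have "\<dots> = (real j - n) * real (Suc j choose i)" using R1 Suc by simp
  finally show ?thesis .
qed

lemma sum_upt_three_terms:
  fixes f :: "nat \<Rightarrow> 'a::comm_monoid_add"
  assumes i: "i < n" and f0: "\<And>k. k < n \<Longrightarrow> k \<noteq> i \<Longrightarrow> k \<noteq> i + 1 \<Longrightarrow> k + 1 \<noteq> i \<Longrightarrow> f k = 0"
  shows "(\<Sum>k\<in>{0..<n}. f k)
    = (if 0 < i then f (i - 1) else 0) + f i + (if i + 1 < n then f (i+1) else 0)"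
proof -
  have "(\<Sum>k\<in>{0..<n}. f k) = (\<Sum>k\<in>{0..<n}. (if k = i - 1 \<and> 0 < i then f k else 0)
      + (if k = i then f k else 0) + (if k = i + 1 then f k else 0))"
    by (rule sum.cong) (auto simp: f0)
  also have "\<dots> = (if 0 < i then f (i - 1) else 0) + f i + (if i + 1 < n then f (i+1) else 0)"
    using i by (auto simp: sum.distrib sum.delta)
  finally show ?thesis .
qed

lemma mult_subdiag_shift:
  assumes X: "X \<in> carrier_mat k M"
  shows "X * subdiag_shift M = mat k M (\<lambda>(i,j). if j + 1 < M then X $$ (i, j + 1) else 0)"
proof (rule eq_matI)
  fix i j assume "i < dim_row (mat k M (\<lambda>(i,j). if j + 1 < M then X $$ (i, j + 1) else 0))"
    and "j < dim_col (mat k M (\<lambda>(i,j). if j + 1 < M then X $$ (i, j + 1) else 0))"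
  then have i: "i < k" and j: "j < M" by auto
  have "(X * subdiag_shift M) $$ (i,j) = (\<Sum>l\<in>{0..<M}. X $$ (i,l) * (if l = j + 1 then 1 else 0))"
    using X i j by (simp add: scalar_prod_def subdiag_shift_def)
  also have "\<dots> = (\<Sum>l\<in>{0..<M}. if l = j + 1 then X $$ (i,l) else 0)"
    by (rule sum.cong) auto
  finally show "(X * subdiag_shift M) $$ (i,j)
      = mat k M (\<lambda>(i,j). if j + 1 < M then X $$ (i, j + 1) else 0) $$ (i,j)"
    using i j by simp
qed (use X in \<open>auto simp: subdiag_shift_def\<close>)

text \<open>Column j of binom_col_mat is, up to scaling, the coefficient vector of (1+x)^j, and
  T_rescaled acts on coefficient vectors of polynomials p of degree < M as
  p \<mapsto> 2 ((1+x)^2 p' - (M - 1) (1+x) p), which maps (1+x)^j to 2 (j - (M - 1)) (1+x)^(j+1).\<close>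
lemma T_rescaled_mult_binom_col_mat:
  "T_rescaled M * binom_col_mat M = binom_col_mat M * subdiag_shift M"
proof (rule eq_matI)
  fix i j assume "i < dim_row (binom_col_mat M * subdiag_shift M)"
    and "j < dim_col (binom_col_mat M * subdiag_shift M)"
  then have i: "i < M" and j: "j < M" by (auto simp: binom_col_mat_def subdiag_shift_def)
  let ?K = "T_rescaled M" and ?U = "binom_col_mat M"
  have U: "?U \<in> carrier_mat M M" by (simp add: binom_col_mat_def)
  have "(?K * ?U) $$ (i,j) = (\<Sum>k\<in>{0..<M}. ?K $$ (i,k) * ?U $$ (k,j))"
    using i j by (simp add: scalar_prod_def T_rescaled_def binom_col_mat_def)
  also have "\<dots> = (if 0 < i then ?K $$ (i,i-1) * ?U $$ (i-1,j) else 0)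
     + ?K $$ (i,i) * ?U $$ (i,j) + (if i + 1 < M then ?K $$ (i,i+1) * ?U $$ (i+1,j) else 0)"
    by (rule sum_upt_three_terms[OF i]) (use i in \<open>auto simp: T_rescaled_def\<close>)
  also have "\<dots> = 2 * binom_col_scale M j *
      ((if 0 < i then - ((real M - 1) - real i + 1) * real (j choose (i-1)) else 0)
        + (2 * real i - (real M - 1)) * real (j choose i) + real (i+1) * real (j choose (i+1)))"
  proof (cases "i + 1 < M")
    case True
    then show ?thesis using i j by (auto simp: T_rescaled_def binom_col_mat_def algebra_simps)
  next
    case False
    then have "j choose Suc i = 0" using j by (simp add: binomial_eq_0)
    then show ?thesis
      using i j False by (auto simp: T_rescaled_def binom_col_mat_def algebra_simps \<open>j choose Suc i = 0\<close>)
  qed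
  also have "\<dots> = 2 * binom_col_scale M j * ((real j - (real M - 1)) * real (Suc j choose i))"
    by (simp only: binomial_three_term)
  also have "\<dots> = (?U * subdiag_shift M) $$ (i,j)"
  proof (cases "Suc j < M")
    case True
    then show ?thesis
      using i j by (simp add: mult_subdiag_shift[OF U]) (simp add: binom_col_mat_def algebra_simps)
  next
    case False
    then have "real j - (real M - 1) = 0" using j by simp
    then show ?thesis using i j False by (simp add: mult_subdiag_shift[OF U])
  qed
  finally show "(?K * ?U) $$ (i,j) = (?U * subdiag_shift M) $$ (i,j)" .
qed (auto simp: binom_col_mat_def subdiag_shift_def T_rescaled_def)

lemma binom_col_mat_invertible:
  "\<exists>V. V \<in> carrier_mat M M \<and> binom_col_mat M * V = 1\<^sub>m M \<and> V * binom_col_mat M = 1\<^sub>m M"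
proof -
  have U: "binom_col_mat M \<in> carrier_mat M M" by (simp add: binom_col_mat_def)
  have "upper_triangular (binom_col_mat M)" by (auto simp: upper_triangular_def binom_col_mat_def)
  then have "det (binom_col_mat M) = prod_list (diag_mat (binom_col_mat M))"
    by (rule det_upper_triangular[OF _ U])
  moreover have "binom_col_scale M j \<noteq> 0" if "j < M" for j
    using that by (induction j) auto
  ultimately have "det (binom_col_mat M) \<noteq> 0"
    by (auto simp: diag_mat_def binom_col_mat_def prod_list_zero_iff)
  from det_non_zero_imp_unit[OF U this] show ?thesis
    unfolding Units_def ring_mat_def by auto
qed

lemma subdiag_shift_similar_jordan_block:
  "similar_mat_wit (subdiag_shift M) (jordan_block M 0)
     (perm_matrix M (\<lambda>i. M - 1 - i)) (transpose_mat (perm_matrix M (\<lambda>i. M - 1 - i)))"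
proof -
  have rev: "bij_betw (\<lambda>i. M - 1 - i) {..<M} {..<M}"
    by (rule bij_betw_byWitness[where f' = "\<lambda>i. M - 1 - i"]) auto
  have J: "jordan_block M (0::real) \<in> carrier_mat M M" unfolding carrier_mat_def by simp
  have Z: "mat M M (\<lambda>(i,j). jordan_block M 0 $$ (M - 1 - i, M - 1 - j)) = subdiag_shift M"
  proof (rule eq_matI)
    fix i j assume "i < dim_row (subdiag_shift M)" "j < dim_col (subdiag_shift M)"
    then have i: "i < M" and j: "j < M" by (simp_all add: subdiag_shift_def)
    then have "jordan_block M (0::real) $$ (M - 1 - i, M - 1 - j) = (if i = j + 1 then 1 else 0)"
      by (subst jordan_block_index) auto
    with i j show "mat M M (\<lambda>(i,j). jordan_block M 0 $$ (M - 1 - i, M - 1 - j)) $$ (i,j)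
        = subdiag_shift M $$ (i,j)"
      by (simp add: subdiag_shift_def)
  qed (simp_all add: subdiag_shift_def)
  from similar_mat_wit_perm_matrix[OF J rev] show ?thesis unfolding Z .
qed

lemma T_similar_jordan_block: "\<exists>P Q. similar_mat_wit (2 \<cdot>\<^sub>m T_mat M) (jordan_block M 0) P Q"
proof -
  obtain V where V: "V \<in> carrier_mat M M" "binom_col_mat M * V = 1\<^sub>m M" "V * binom_col_mat M = 1\<^sub>m M"
    using binom_col_mat_invertible by blast
  have K: "T_rescaled M \<in> carrier_mat M M" and U: "binom_col_mat M \<in> carrier_mat M M"
    by (simp_all add: T_rescaled_def binom_col_mat_def)
  have "T_rescaled M = T_rescaled M * binom_col_mat M * V"
    using K U V by (simp add: assoc_mult_mat[of _ M M _ M _ M])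
  also have "\<dots> = binom_col_mat M * subdiag_shift M * V"
    by (simp only: T_rescaled_mult_binom_col_mat)
  finally have "similar_mat_wit (T_rescaled M) (subdiag_shift M) (binom_col_mat M) V"
    by (rule similar_mat_witI[OF V(2,3) _ K _ U V(1)]) (simp add: subdiag_shift_def)
  then show ?thesis
    using similar_mat_wit_trans[OF similar_mat_wit_trans[OF T_similar_T_rescaled]
        subdiag_shift_similar_jordan_block] by blast
qed

lemma jordan_nf_scalar_plus_T:
  fixes a :: real
  assumes "M \<ge> 1"
  shows "jordan_nf (cmat (a \<cdot>\<^sub>m 1\<^sub>m M + 2 \<cdot>\<^sub>m T_mat M)) [(M, complex_of_real a)]"
proof -
  have T: "2 \<cdot>\<^sub>m T_mat M \<in> carrier_mat M M" by (simp add: T_mat_def)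
  have J: "a \<cdot>\<^sub>m 1\<^sub>m M + jordan_block M 0 = jordan_block M a" by (rule eq_matI) auto
  obtain P Q where "similar_mat_wit (2 \<cdot>\<^sub>m T_mat M) (jordan_block M 0) P Q"
    using T_similar_jordan_block by blast
  from similar_mat_wit_add_scalar[OF T this, where a = a]
  have "similar_mat_wit (a \<cdot>\<^sub>m 1\<^sub>m M + 2 \<cdot>\<^sub>m T_mat M) (jordan_block M a) P Q"
    unfolding J .
  moreover have "a \<cdot>\<^sub>m 1\<^sub>m M + 2 \<cdot>\<^sub>m T_mat M \<in> carrier_mat M M" using T by simp
  moreover have "cmat (jordan_block M a) = jordan_block M (complex_of_real a)" by (rule eq_matI) auto
  ultimately have "similar_mat (cmat (a \<cdot>\<^sub>m 1\<^sub>m M + 2 \<cdot>\<^sub>m T_mat M)) (jordan_block M (complex_of_real a))"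
    unfolding similar_mat_def using similar_mat_wit_of_real by metis
  moreover have "jordan_matrix [(M, complex_of_real a)] = jordan_block M (complex_of_real a)"
    by (simp only: jordan_matrix_def list.map prod.case diag_block_mat_singleton)
  ultimately show ?thesis using assms by (simp add: jordan_nf_def)
qed

section \<open>Block structure of H\<close>

lemma H_mat_carrier[simp]: "H_mat N \<gamma> \<in> carrier_mat N N"
  and A_mat_carrier[simp]: "A_mat J \<gamma> \<in> carrier_mat J J"
  and B_mat_carrier[simp]: "B_mat J \<gamma> \<in> carrier_mat J J"
  by (simp_all add: H_mat_def A_mat_def B_mat_def)

lemma H_mat_mult_vanishing_parity:
  assumes v: "v \<in> carrier_vec N" and z: "\<forall>k<N. even k = e \<longrightarrow> v $ k = 0"
    and i: "i < N" and ei: "even i = e"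
  shows "(H_mat N \<gamma> *\<^sub>v v) $ i = 0"
proof -
  have H: "dim_row (H_mat N \<gamma>) = N" "dim_col (H_mat N \<gamma>) = N" by (simp_all add: H_mat_def)
  have "H_mat N \<gamma> $$ (i,k) * v $ k = 0" if k: "k < N" for k
  proof (cases "H_mat N \<gamma> $$ (i,k) = 0")
    case False
    then have "k = i \<or> k = i + 2 \<or> i = k + 2" using i k by (auto simp: H_mat_def split: if_splits)
    then have "even k = e" using ei by auto
    then show ?thesis using z k by simp
  qed simp
  then show ?thesis using i v H by (auto simp: scalar_prod_def intro: sum.neutral)
qed

lemma odd_span_invariant: "v \<in> odd_span N \<Longrightarrow> H_mat N \<gamma> *\<^sub>v v \<in> odd_span N"
  using H_mat_mult_vanishing_parity[of v N False]
  by (auto simp: odd_span_def intro: mult_mat_vec_carrier[OF H_mat_carrier])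

lemma even_span_invariant: "v \<in> even_span N \<Longrightarrow> H_mat N \<gamma> *\<^sub>v v \<in> even_span N"
  using H_mat_mult_vanishing_parity[of v N True]
  by (auto simp: even_span_def intro: mult_mat_vec_carrier[OF H_mat_carrier])

text \<open>Lists the even 0-based indices (paper: odd indices) first: it sorts H into A and B.\<close>
definition evens_first :: "nat \<Rightarrow> nat \<Rightarrow> nat" where
  "evens_first J i = (if i < J then 2 * i else if i < 2 * J then 2 * (i - J) + 1 else i)"

lemma evens_first_permutes: "evens_first J permutes {..<2*J}"
proof (rule bij_imp_permutes)
  have inj: "inj_on (evens_first J) {..<2*J}"
    by (rule inj_onI) (auto simp: evens_first_def split: if_splits; presburger)
  have "evens_first J ` {..<2*J} \<subseteq> {..<2*J}" by (auto simp: evens_first_def)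
  then show "bij_betw (evens_first J) {..<2*J} {..<2*J}"
    using inj endo_inj_surj[OF _ _ inj] by (auto simp: bij_betw_def)
  show "evens_first J x = x" if "x \<notin> {..<2*J}" for x using that by (simp add: evens_first_def)
qed

lemma H_mat_reindexed_block:
  assumes N: "N = 2 * J"
  shows "mat N N (\<lambda>(i,j). H_mat N \<gamma> $$ (evens_first J i, evens_first J j))
    = four_block_mat (A_mat J \<gamma>) (0\<^sub>m J J) (0\<^sub>m J J) (B_mat J \<gamma>)"
proof (rule eq_matI)
  fix i j assume "i < dim_row (four_block_mat (A_mat J \<gamma>) (0\<^sub>m J J) (0\<^sub>m J J) (B_mat J \<gamma>))"
     "j < dim_col (four_block_mat (A_mat J \<gamma>) (0\<^sub>m J J) (0\<^sub>m J J) (B_mat J \<gamma>))"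
  then have i: "i < N" and j: "j < N" using N by (auto simp: A_mat_def B_mat_def)
  have "H_mat N \<gamma> $$ (evens_first J i, evens_first J j)
     = (if i < J then if j < J then A_mat J \<gamma> $$ (i,j) else 0
        else if j < J then 0 else B_mat J \<gamma> $$ (i - J, j - J))"
  proof (cases "i < J"; cases "j < J")
    assume "i < J" "j < J"
    then show ?thesis using N by (auto simp: evens_first_def H_mat_def A_mat_def algebra_simps)
  next
    assume "\<not> i < J" "\<not> j < J"
    then show ?thesis using N i j by (auto simp: evens_first_def H_mat_def B_mat_def algebra_simps)
  qed (use N i j in \<open>auto simp: evens_first_def H_mat_def; presburger\<close>)+
  then show "mat N N (\<lambda>(i,j). H_mat N \<gamma> $$ (evens_first J i, evens_first J j)) $$ (i,j)
     = four_block_mat (A_mat J \<gamma>) (0\<^sub>m J J) (0\<^sub>m J J) (B_mat J \<gamma>) $$ (i,j)"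
    using i j N by (simp add: A_mat_def B_mat_def)
qed (auto simp: N A_mat_def B_mat_def)

lemma H_mat_similar_block:
  assumes N: "N = 2 * J"
  shows "similar_mat_wit (four_block_mat (A_mat J \<gamma>) (0\<^sub>m J J) (0\<^sub>m J J) (B_mat J \<gamma>)) (H_mat N \<gamma>)
     (perm_matrix N (evens_first J)) (transpose_mat (perm_matrix N (evens_first J)))"
  using similar_mat_wit_perm_matrix[OF H_mat_carrier, of "evens_first J" N \<gamma>]
    permutes_imp_bij[OF evens_first_permutes] H_mat_reindexed_block[OF N]
  by (simp add: N)

lemma char_poly_H_mat:
  assumes N: "N = 2 * J"
  shows "char_poly (cmat (H_mat N \<gamma>)) = char_poly (cmat (A_mat J \<gamma>)) * char_poly (cmat (B_mat J \<gamma>))"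
proof -
  let ?F = "four_block_mat (A_mat J \<gamma>) (0\<^sub>m J J) (0\<^sub>m J J) (B_mat J \<gamma>)"
  have "?F \<in> carrier_mat N N" using N by (simp add: mult_2)
  from similar_mat_wit_of_real[OF this H_mat_similar_block[OF N]]
  have "char_poly (cmat (H_mat N \<gamma>)) = char_poly (cmat ?F)"
    by (intro char_poly_similar) (auto simp: similar_mat_def intro: similar_mat_wit_sym)
  also have "cmat ?F = four_block_mat (cmat (A_mat J \<gamma>)) (0\<^sub>m J J) (0\<^sub>m J J) (cmat (B_mat J \<gamma>))"
    by (rule eq_matI) (auto simp: A_mat_def B_mat_def)
  also have "char_poly \<dots> = char_poly (cmat (A_mat J \<gamma>)) * char_poly (cmat (B_mat J \<gamma>))"
    by (rule char_poly_0_block[OF refl])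
      (use char_poly_factorized[of "cmat (A_mat J \<gamma>)" J] char_poly_factorized[of "cmat (B_mat J \<gamma>)" J]
        in auto)
  finally show ?thesis .
qed

section \<open>Single eigenvalues\<close>

lemma sum_upt_affine_four: "(\<Sum>i\<in>{0..<n}. a + 4 * real i) = real n * a + 2 * real n * (real n - 1)"
  by (induction n) (simp_all add: algebra_simps)

lemma mat_trace_A_mat: "mat_trace (cmat (A_mat J \<gamma>)) = - of_nat J"
proof -
  have "mat_trace (cmat (A_mat J \<gamma>)) = of_real (\<Sum>i\<in>{0..<J}. (1 - 2 * real J) + 4 * real i)"
    unfolding mat_trace_def by (simp add: A_mat_def)
  then show ?thesis unfolding sum_upt_affine_four by (simp add: algebra_simps)
qed

lemma mat_trace_B_mat: "mat_trace (cmat (B_mat J \<gamma>)) = of_nat J"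
proof -
  have "mat_trace (cmat (B_mat J \<gamma>)) = of_real (\<Sum>i\<in>{0..<J}. (3 - 2 * real J) + 4 * real i)"
    unfolding mat_trace_def by (simp add: B_mat_def)
  then show ?thesis unfolding sum_upt_affine_four by (simp add: algebra_simps)
qed

lemma A_mat_unique_eigenvalue:
  assumes "J \<ge> 1" and "\<And>e. eigenvalue (cmat (A_mat J \<gamma>)) e \<Longrightarrow> e = c"
  shows "c = -1"
proof -
  have "of_nat J * c = of_nat J * (-1 :: complex)"
    using mat_trace_unique_eigenvalue[of "cmat (A_mat J \<gamma>)" J c] mat_trace_A_mat[of J \<gamma>] assms(2)
    by simp
  moreover have "of_nat J \<noteq> (0 :: complex)" using assms(1) by simp
  ultimately show ?thesis by (metis mult_left_cancel)
qed

lemma B_mat_unique_eigenvalue: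
  assumes "J \<ge> 1" and "\<And>e. eigenvalue (cmat (B_mat J \<gamma>)) e \<Longrightarrow> e = c"
  shows "c = 1"
  using mat_trace_unique_eigenvalue[of "cmat (B_mat J \<gamma>)" J c] mat_trace_B_mat[of J \<gamma>] assms
  by simp

lemma root_eq_if_order_eq_degree:
  fixes p :: "complex poly"
  assumes p: "p \<noteq> 0" and order: "order c p = degree p" and root: "poly p e = 0"
  shows "e = c"
proof -
  define n where "n = degree p"
  obtain q where q: "p = [:-c, 1:] ^ n * q"
    using order_1[of c p] unfolding order n_def[symmetric] by (auto elim: dvdE)
  with p have "q \<noteq> 0" by auto
  have "degree p = n + degree q"
    using \<open>q \<noteq> 0\<close> unfolding q by (simp add: degree_mult_eq degree_power_eq)
  then have "q = [:coeff q 0:]" by (simp add: n_def degree_0_id)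
  with \<open>q \<noteq> 0\<close> have "coeff q 0 \<noteq> 0" by (metis pCons_0_0)
  moreover from root have "(e - c) ^ n * coeff q 0 = 0"
    unfolding q by (subst (asm) \<open>q = [:coeff q 0:]\<close>) (auto simp: poly_power)
  ultimately show ?thesis by simp
qed

lemma H_mat_no_full_multiplicity_eigenvalue:
  assumes J: "J \<ge> 1" and N: "N = 2 * J"
  shows "\<not> (\<exists>c. order c (char_poly (cmat (H_mat N \<gamma>))) = N)"
proof
  assume "\<exists>c. order c (char_poly (cmat (H_mat N \<gamma>))) = N"
  then obtain c where c: "order c (char_poly (cmat (H_mat N \<gamma>))) = N" ..
  have "degree (char_poly (cmat (H_mat N \<gamma>))) = N" "char_poly (cmat (H_mat N \<gamma>)) \<noteq> 0"
    using degree_monic_char_poly[of "cmat (H_mat N \<gamma>)" N] by auto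
  with c have root: "e = c" if "poly (char_poly (cmat (H_mat N \<gamma>))) e = 0" for e
    using root_eq_if_order_eq_degree that by metis
  have "c = -1"
  proof (rule A_mat_unique_eigenvalue[OF J])
    fix e assume "eigenvalue (cmat (A_mat J \<gamma>)) e"
    then show "e = c" using root eigenvalue_root_char_poly[of "cmat (A_mat J \<gamma>)" J]
      by (simp add: char_poly_H_mat[OF N])
  qed
  moreover have "c = 1"
  proof (rule B_mat_unique_eigenvalue[OF J])
    fix e assume "eigenvalue (cmat (B_mat J \<gamma>)) e"
    then show "e = c" using root eigenvalue_root_char_poly[of "cmat (B_mat J \<gamma>)" J]
      by (simp add: char_poly_H_mat[OF N])
  qed
  ultimately show False by simp
qed

section \<open>The special choice of gamma\<close>

lemma A_mat_eq_shifted_T: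
  assumes "\<And>i. i + 1 < J \<Longrightarrow> \<gamma> (2*i+1) = 2 * sqrt (real (i+1) * (real J - real (i+1)))"
  shows "A_mat J \<gamma> = - 1\<^sub>m J + 2 \<cdot>\<^sub>m T_mat J"
  using assms by (auto intro!: eq_matI simp: A_mat_def T_mat_def algebra_simps)

lemma B_mat_eq_shifted_T:
  assumes "\<And>i. i + 1 < J \<Longrightarrow> \<gamma> (2*i+2) = 2 * sqrt (real (i+1) * (real J - real (i+1)))"
  shows "B_mat J \<gamma> = 1\<^sub>m J + 2 \<cdot>\<^sub>m T_mat J"
  using assms by (auto intro!: eq_matI simp: B_mat_def T_mat_def algebra_simps)

lemma eigenvalue_iff_of_jordan_nf_single_block:
  fixes X :: "complex mat"
  assumes jnf: "jordan_nf X [(M, a)]" and X: "X \<in> carrier_mat M M" and M: "M \<ge> 1"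
  shows "eigenvalue X e \<longleftrightarrow> e = a"
proof -
  have "char_poly X = [:- a, 1:] ^ M" using jordan_nf_char_poly[OF jnf] by simp
  then show ?thesis using eigenvalue_root_char_poly[OF X] M by (simp add: poly_power)
qed

lemma special_gamma_blocks:
  assumes J: "J \<ge> 1" and N: "N = 2 * J"
    and \<gamma>: "\<forall>n. 1 \<le> n \<and> n \<le> N - 2 \<longrightarrow>
             \<gamma> n = 2 * sqrt (real ((n+1) div 2) * (real J - real ((n+1) div 2)))"
  shows "A_mat J \<gamma> = - 1\<^sub>m J + 2 \<cdot>\<^sub>m T_mat J
          \<and> B_mat J \<gamma> = 1\<^sub>m J + 2 \<cdot>\<^sub>m T_mat J
          \<and> (\<forall>e. eigenvalue (cmat (A_mat J \<gamma>)) e \<longleftrightarrow> e = -1)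
          \<and> (\<forall>e. eigenvalue (cmat (B_mat J \<gamma>)) e \<longleftrightarrow> e = 1)
          \<and> jordan_nf (cmat (A_mat J \<gamma>)) [(J, -1)]
          \<and> jordan_nf (cmat (B_mat J \<gamma>)) [(J, 1)]"
proof -
  have "\<gamma> (2*i+1) = 2 * sqrt (real (i+1) * (real J - real (i+1)))"
    and "\<gamma> (2*i+2) = 2 * sqrt (real (i+1) * (real J - real (i+1)))" if "i + 1 < J" for i
    using \<gamma> that N by (auto dest!: spec[of _ "2*i+1"] spec[of _ "2*i+2"])
  then have A: "A_mat J \<gamma> = - 1\<^sub>m J + 2 \<cdot>\<^sub>m T_mat J" and B: "B_mat J \<gamma> = 1\<^sub>m J + 2 \<cdot>\<^sub>m T_mat J"
    by (simp_all add: A_mat_eq_shifted_T B_mat_eq_shifted_T)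
  have "- 1\<^sub>m J = (-1) \<cdot>\<^sub>m (1\<^sub>m J :: real mat)" and "1\<^sub>m J = 1 \<cdot>\<^sub>m (1\<^sub>m J :: real mat)"
    by (auto intro!: eq_matI)
  then have jA: "jordan_nf (cmat (A_mat J \<gamma>)) [(J, -1)]" and jB: "jordan_nf (cmat (B_mat J \<gamma>)) [(J, 1)]"
    using jordan_nf_scalar_plus_T[OF J, of "-1"] jordan_nf_scalar_plus_T[OF J, of 1]
    unfolding A B by simp_all
  have "cmat (A_mat J \<gamma>) \<in> carrier_mat J J" "cmat (B_mat J \<gamma>) \<in> carrier_mat J J" by simp_all
  with A B jA jB show ?thesis
    using eigenvalue_iff_of_jordan_nf_single_block[OF jA _ J] eigenvalue_iff_of_jordan_nf_single_block[OF jB _ J]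
    by blast
qed

theorem lemma1:
  fixes J N :: nat and \<gamma> :: "nat \<Rightarrow> real"
  assumes J: "J \<ge> 1" and N: "N = 2 * J"
    and sym: "\<And>n. 1 \<le> n \<Longrightarrow> n \<le> N - 2 \<Longrightarrow> \<gamma> n = \<gamma> (N - 1 - n)"
  shows
    \<comment> \<open>(a)\<close>
    "(\<forall>v \<in> odd_span N. H_mat N \<gamma> *\<^sub>v v \<in> odd_span N)
     \<and> (\<forall>v \<in> even_span N. H_mat N \<gamma> *\<^sub>v v \<in> even_span N)
     \<and> (\<exists>\<sigma>. \<sigma> permutes {..<N} \<and>
          perm_matrix N \<sigma> * H_mat N \<gamma> * transpose_mat (perm_matrix N \<sigma>)
            = four_block_mat (A_mat J \<gamma>) (0\<^sub>m J J) (0\<^sub>m J J) (B_mat J \<gamma>))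
     \<comment> \<open>(b)\<close>
     \<and> (\<forall>c. (\<forall>e. eigenvalue (cmat (A_mat J \<gamma>)) e \<longrightarrow> e = c) \<longrightarrow> c = -1)
     \<and> (\<forall>c. (\<forall>e. eigenvalue (cmat (B_mat J \<gamma>)) e \<longrightarrow> e = c) \<longrightarrow> c = 1)
     \<and> \<not> (\<exists>c. order c (char_poly (cmat (H_mat N \<gamma>))) = N)
     \<comment> \<open>(c)\<close>
     \<and> ((\<forall>n. 1 \<le> n \<and> n \<le> N - 2 \<longrightarrow>
             \<gamma> n = 2 * sqrt (real ((n+1) div 2) * (real J - real ((n+1) div 2))))
        \<longrightarrow> A_mat J \<gamma> = - 1\<^sub>m J + 2 \<cdot>\<^sub>m T_mat J
          \<and> B_mat J \<gamma> = 1\<^sub>m J + 2 \<cdot>\<^sub>m T_mat J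
          \<and> (\<forall>e. eigenvalue (cmat (A_mat J \<gamma>)) e \<longleftrightarrow> e = -1)
          \<and> (\<forall>e. eigenvalue (cmat (B_mat J \<gamma>)) e \<longleftrightarrow> e = 1)
          \<and> jordan_nf (cmat (A_mat J \<gamma>)) [(J, -1)]
          \<and> jordan_nf (cmat (B_mat J \<gamma>)) [(J, 1)])"
proof -
  have "perm_matrix N (evens_first J) * H_mat N \<gamma> * transpose_mat (perm_matrix N (evens_first J))
      = four_block_mat (A_mat J \<gamma>) (0\<^sub>m J J) (0\<^sub>m J J) (B_mat J \<gamma>)"
    using similar_mat_witD(3)[OF refl H_mat_similar_block[OF N]] ..
  then show ?thesis
    using odd_span_invariant even_span_invariant evens_first_permutes[of J]
      A_mat_unique_eigenvalue[OF J] B_mat_unique_eigenvalue[OF J]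
      H_mat_no_full_multiplicity_eigenvalue[OF J N] special_gamma_blocks[OF J N] N
    by blast
qed

end
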